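(* The relations $[B_{r-1},[B_r,[F_X^+,B_{\tau(r)}]_q]_q]_q=[[B_{r-1},[B_r,F_X^+]_q]_q,B_{\tau(r)}]_q+qc_{\tau(r)}B_{r-1}L_r(K_X-K_X^{-1})$ and $[B_{\tau(r-1)},[B_{\tau(r)},[F_X^-,B_r]_q]_q]_q=[[B_{\tau(r-1)},[B_{\tau(r)},F_X^-]_q]_q,B_r]_q+qc_rB_{\tau(r-1)}L_{\tau(r)}(K_X-K_X^{-1})$ hold in $B_{\mathbf c}$.
   Context: Let $\mathbb K$ be a field of characteristic zero and $q$ an indeterminate. $n\ge1$, $I=\{1,\dots,n\}$, $\mathfrak g=\mathfrak{sl}_{n+1}(\mathbb C)$, simple roots $\alpha_i$, fundamental weights $\varpi_i$, weight lattice $P$, Cartan matrix $a_{ii}=2$, $a_{ij}=-1$ if $|i-j|=1$, else $0$, form $(\alpha_i,\alpha_j)=a_{ij}$, $(\alpha_i,\varpi_j)=\delta_{ij}$. $U_q(\mathfrak g)$ is the $\mathbb K(q^{1/2})$-algebra generated by $E_i,F_i,K_\mu$ ($\mu\in P$) with $K_0=1$, $K_\mu K_\lambda=K_{\mu+\lambda}$, $K_\mu E_i=q^{(\alpha_i,\mu)}E_iK_\mu$, $K_\mu F_i=q^{-(\alpha_i,\mu)}F_iK_\mu$, $E_iF_j-F_jE_i=\delta_{ij}\frac{K_i-K_i^{-1}}{q-q^{-1}}$ ($K_i=K_{\alpha_i}$), and the quantum Serre relations. $[a,b]_c=ab-cba$. Fix $r$ with $2\le r\le\lceil n/2\rceil-1$,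 $X=\{r+1,\dots,n-r\}$, $\tau(i)=n-i+1$ (on weights $\varpi_i\mapsto\varpi_{\tau(i)}$). $E_X^+=[E_{r+1},[\dots,[E_{n-r-1},E_{n-r}]_{q^{-1}}\dots]_{q^{-1}}]_{q^{-1}}$, $E_X^-=[E_{n-r},[\dots,[E_{r+2},E_{r+1}]_{q^{-1}}\dots]_{q^{-1}}]_{q^{-1}}$, $F_X^+=[F_{r+1},[\dots,[F_{n-r-1},F_{n-r}]_q\dots]_q]_q$, $F_X^-=[F_{n-r},[\dots,[F_{r+2},F_{r+1}]_q\dots]_q]_q$ (equal to $E_{r+1}$, $F_{r+1}$ if $|X|=1$); $K_X=K_{r+1}\cdots K_{n-r}$; $L_i=K_iK_{\tau(i)}^{-1}$. $\mathcal M_X$ is generated by $E_j,F_j,K_j^{\pm1}$ ($j\in X$); $U^0_\Theta$ by the $K_\mu$ with $-w_X\tau(\mu)=\mu$ ($w_X$ longest element of the parabolic Weyl subgroup for $X$). Parameters $c_i\in\mathbb K(q^{1/2})^\times$ ($i\in I\setminus X$) with $c_i=c_{\tau(i)}$ for $i\notin X\cup\{r,\tau(r)\}$. $B_i=F_i-c_iE_{\tau(i)}K_i^{-1}$ for $i\in I\setminus(X\cup\{r,\tau(r)\})$, $B_r=F_r-c_r[E_X^+,E_{\tau(r)}]_{q^{-1}}K_r^{-1}$, $B_{\tau(r)}=F_{\tau(r)}-c_{\tau(r)}[E_X^-,E_r]_{q^{-1}}K_{\tau(r)}^{-1}$; $B_{\mathbf c}$ is the subalgebra generated by $\mathcal M_X$,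 $U^0_\Theta$ and the $B_i$. *)

theory Defs
  imports "HOL-Library.Function_Algebras" "HOL-Computational_Algebra.Polynomial" "HOL-Computational_Algebra.Fraction_Field"
begin

text \<open>Scalars: the field K(q^(1/2)) realised as the fraction field of K[x], x = q^(1/2).\<close>
type_synonym 'k scal = "'k poly fract"

definition qhalf :: "'k::field_char_0 scal" where
  "qhalf = Fract [:0, 1:] 1"

definition qq :: "'k::field_char_0 scal" where
  "qq = qhalf ^ 2"

text \<open>Weights mu in P, in coordinates w.r.t. the fundamental weights:
  mu = sum_i mu(i) varpi_i, with support in {1..n}.\<close>
type_synonym wt = "nat \<Rightarrow> int"

definition wts :: "nat \<Rightarrow> wt set" where
  "wts n = {\<mu>. \<forall>j. j \<notin> {1..n} \<longrightarrow> \<mu> j = 0}"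

text \<open>simple root alpha_i in fundamental weight coordinates (column i of the Cartan matrix)\<close>
definition alpha :: "nat \<Rightarrow> nat \<Rightarrow> wt" where
  "alpha n i = (\<lambda>j. if j \<notin> {1..n} then 0 else if j = i then 2
                     else if j + 1 = i \<or> i + 1 = j then -1 else 0)"

definition tau :: "nat \<Rightarrow> nat \<Rightarrow> nat" where
  "tau n i = n + 1 - i"

definition qbr :: "('s \<Rightarrow> 'a::ring_1) \<Rightarrow> 's \<Rightarrow> 'a \<Rightarrow> 'a \<Rightarrow> 'a" where
  "qbr \<iota> c a b = a * b - \<iota> c * (b * a)"

text \<open>nested bracket [f x1,[f x2,[ ... ,[f x_{k-1}, f x_k]_c ...]_c]_c]_c\<close>
definition nestbr :: "('s \<Rightarrow> 'a::ring_1) \<Rightarrow> 's \<Rightarrow> (nat \<Rightarrow> 'a) \<Rightarrow> nat list \<Rightarrow> 'a" where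
  "nestbr \<iota> c f xs = foldr (\<lambda>i acc. qbr \<iota> c (f i) acc) (butlast xs) (f (last xs))"

text \<open>Defining relations of U_q(sl_{n+1}) in a K(q^(1/2))-algebra 'a, whose
  algebra structure is given by a ring homomorphism iota into the centre.\<close>
definition Uq_rels :: "nat \<Rightarrow> ('k::field_char_0 scal \<Rightarrow> 'a::ring_1) \<Rightarrow> (nat \<Rightarrow> 'a) \<Rightarrow> (nat \<Rightarrow> 'a)
                        \<Rightarrow> (wt \<Rightarrow> 'a) \<Rightarrow> bool" where
  "Uq_rels n \<iota> E F K \<longleftrightarrow>
     \<iota> 1 = 1 \<and> (\<forall>a b. \<iota> (a + b) = \<iota> a + \<iota> b) \<and> (\<forall>a b. \<iota> (a * b) = \<iota> a * \<iota> b) \<and>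
     (\<forall>s x. \<iota> s * x = x * \<iota> s) \<and>
     K 0 = 1 \<and>
     (\<forall>\<mu>\<in>wts n. \<forall>\<nu>\<in>wts n. K \<mu> * K \<nu> = K (\<mu> + \<nu>)) \<and>
     (\<forall>\<mu>\<in>wts n. \<forall>i\<in>{1..n}. K \<mu> * E i = \<iota> (qq powi (\<mu> i)) * E i * K \<mu>) \<and>
     (\<forall>\<mu>\<in>wts n. \<forall>i\<in>{1..n}. K \<mu> * F i = \<iota> (qq powi (- \<mu> i)) * F i * K \<mu>) \<and>
     (\<forall>i\<in>{1..n}. \<forall>j\<in>{1..n}. E i * F j - F j * E i =
        (if i = j then \<iota> (inverse (qq - inverse qq)) * (K (alpha n i) - K (- alpha n i)) else 0)) \<and>
     (\<forall>i\<in>{1..n}. \<forall>j\<in>{1..n}. (i + 1 = j \<or> j + 1 = i) \<longrightarrow>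
        E i * E i * E j - \<iota> (qq + inverse qq) * (E i * E j * E i) + E j * E i * E i = 0 \<and>
        F i * F i * F j - \<iota> (qq + inverse qq) * (F i * F j * F i) + F j * F i * F i = 0) \<and>
     (\<forall>i\<in>{1..n}. \<forall>j\<in>{1..n}. (i + 1 < j \<or> j + 1 < i) \<longrightarrow>
        E i * E j = E j * E i \<and> F i * F j = F j * F i)"

definition EXp :: "nat \<Rightarrow> nat \<Rightarrow> ('k::field_char_0 scal \<Rightarrow> 'a::ring_1) \<Rightarrow> (nat \<Rightarrow> 'a) \<Rightarrow> 'a" where
  "EXp n r \<iota> E = nestbr \<iota> (inverse qq) E [r+1..<n-r+1]"
definition EXm :: "nat \<Rightarrow> nat \<Rightarrow> ('k::field_char_0 scal \<Rightarrow> 'a::ring_1) \<Rightarrow> (nat \<Rightarrow> 'a) \<Rightarrow> 'a" where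
  "EXm n r \<iota> E = nestbr \<iota> (inverse qq) E (rev [r+1..<n-r+1])"
definition FXp :: "nat \<Rightarrow> nat \<Rightarrow> ('k::field_char_0 scal \<Rightarrow> 'a::ring_1) \<Rightarrow> (nat \<Rightarrow> 'a) \<Rightarrow> 'a" where
  "FXp n r \<iota> F = nestbr \<iota> qq F [r+1..<n-r+1]"
definition FXm :: "nat \<Rightarrow> nat \<Rightarrow> ('k::field_char_0 scal \<Rightarrow> 'a::ring_1) \<Rightarrow> (nat \<Rightarrow> 'a) \<Rightarrow> 'a" where
  "FXm n r \<iota> F = nestbr \<iota> qq F (rev [r+1..<n-r+1])"

text \<open>K_X = K_{r+1} ... K_{n-r} = K_{alpha_{r+1}+...+alpha_{n-r}}\<close>
definition KX :: "nat \<Rightarrow> nat \<Rightarrow> (wt \<Rightarrow> 'a) \<Rightarrow> 'a" where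
  "KX n r K = K (\<Sum>j\<in>{r+1..n-r}. alpha n j)"
definition KXinv :: "nat \<Rightarrow> nat \<Rightarrow> (wt \<Rightarrow> 'a) \<Rightarrow> 'a" where
  "KXinv n r K = K (- (\<Sum>j\<in>{r+1..n-r}. alpha n j))"

definition Lw :: "nat \<Rightarrow> (wt \<Rightarrow> 'a::ring_1) \<Rightarrow> nat \<Rightarrow> 'a" where
  "Lw n K i = K (alpha n i) * K (- alpha n (tau n i))"

definition Bgen :: "nat \<Rightarrow> nat \<Rightarrow> ('k::field_char_0 scal \<Rightarrow> 'a::ring_1) \<Rightarrow> (nat \<Rightarrow> 'a) \<Rightarrow> (nat \<Rightarrow> 'a)
                    \<Rightarrow> (wt \<Rightarrow> 'a) \<Rightarrow> (nat \<Rightarrow> 'k scal) \<Rightarrow> nat \<Rightarrow> 'a" where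
  "Bgen n r \<iota> E F K c i =
     (if i = r then F r - \<iota> (c r) * qbr \<iota> (inverse qq) (EXp n r \<iota> E) (E (tau n r)) * K (- alpha n r)
      else if i = tau n r then
        F (tau n r) - \<iota> (c (tau n r)) * qbr \<iota> (inverse qq) (EXm n r \<iota> E) (E r) * K (- alpha n (tau n r))
      else F i - \<iota> (c i) * E (tau n i) * K (- alpha n i))"

end

(*
  Write a = B_(r-1), b = B_r, d = B_tau(r) and f = F_X^+, and [x, y] = xy - yx.  Since a and d
  commute, expanding the nested q-brackets gives
    [a, [b, [f, d]_q]_q]_q = [[a, [b, f]_q]_q, d]_q + q [a, [f, [b, d]]]_q.
  The F-parts of b and d commute, the root vectors [E_X^+, E_tau(r)] and [E_X^-, E_r] commute by the
  Serre relations, and the mixed terms are computed from [E_i, F_i]; this gives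
    [b, d] = q^-1 c_tau(r) E_X^- L_r - q^-1 c_r E_X^+ L_tau(r).
  Bracketing with f turns E_X^- into [F_X^+, E_X^-] = -(K_X - K_X^-1) / (q - q^-1), which is
  proved by induction along X.
  Finally a commutes with [F_X^+, E_X^+] and with K_X, K_X^-1, while it q-commutes with
  L_tau(r) and q^-1-commutes with L_r: the E_X^+ term disappears and the other one gives
  q c_tau(r) a L_r (K_X - K_X^-1).
  The second relation is the image of the first under the diagram automorphism tau, which maps
  E_i, F_i, K_mu to E_tau(i), F_tau(i), K_(mu o tau) and preserves the defining relations.
*)
theory Submission
  imports Defs
begin

section \<open>The parameter \<open>q\<close>\<close>

lemma qq_square_neq_const: "(qq :: 'k::field_char_0 scal) * qq \<noteq> Fract [:a:] 1"
proof
  assume "(qq :: 'k scal) * qq = Fract [:a:] 1"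
  then have "[:0, 0, 0, 0, 1::'k:] = [:a:]"
    by (simp add: qq_def qhalf_def power2_eq_square eq_fract)
  then show False by simp
qed

lemma qq_nonzero: "(qq :: 'k::field_char_0 scal) \<noteq> 0"
  using qq_square_neq_const[of 0] by (metis mult_zero_left pCons_0_0 Zero_fract_def)

lemma qq_minus_inverse_nonzero: "(qq :: 'k::field_char_0 scal) - inverse qq \<noteq> 0"
proof
  assume "(qq :: 'k scal) - inverse qq = 0"
  then have "qq * qq = qq * inverse (qq :: 'k scal)"
    by simp
  then have "qq * qq = (1 :: 'k scal)"
    by (metis right_inverse qq_nonzero)
  then show False
    using qq_square_neq_const[of "1::'k"] by (simp add: One_fract_def pCons_one)
qed

lemma qq_plus_inverse_nonzero: "(qq :: 'k::field_char_0 scal) + inverse qq \<noteq> 0"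
proof
  assume "(qq :: 'k scal) + inverse qq = 0"
  then have "qq * qq = qq * - inverse (qq :: 'k scal)"
    by (simp add: eq_neg_iff_add_eq_0 distrib_left[symmetric])
  then have "qq * qq = - (1 :: 'k scal)"
    by (metis mult_minus_right right_inverse qq_nonzero)
  then show False
    using qq_square_neq_const[of "-1::'k"]
    by (metis One_fract_def minus_fract minus_pCons minus_zero pCons_one)
qed

abbreviation kappa :: "'k::field_char_0 scal" where
  "kappa \<equiv> inverse (qq - inverse qq)"

section \<open>Central scalars and \<open>q\<close>-brackets\<close>

locale central_scalars =
  fixes \<iota> :: "'k::field_char_0 scal \<Rightarrow> 'a::ring_1"
  assumes scalar_one: "\<iota> 1 = 1"
    and scalar_add: "\<And>a b. \<iota> (a + b) = \<iota> a + \<iota> b"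
    and scalar_mult: "\<And>a b. \<iota> (a * b) = \<iota> a * \<iota> b"
    and scalar_central: "\<And>s x. \<iota> s * x = x * \<iota> s"
begin

definition smul :: "'k scal \<Rightarrow> 'a \<Rightarrow> 'a" where
  "smul s x = \<iota> s * x"

definition qsmul :: "int \<Rightarrow> 'a \<Rightarrow> 'a" where
  "qsmul k x = \<iota> (qq powi k) * x"

lemma scalar_zero: "\<iota> 0 = 0"
  using scalar_add[of 0 0] by simp

lemma scalar_minus: "\<iota> (- a) = - \<iota> a"
  using scalar_add[of a "- a"] by (simp add: scalar_zero eq_neg_iff_add_eq_0 add.commute)

lemma scalar_diff: "\<iota> (a - b) = \<iota> a - \<iota> b"
  using scalar_add[of a "- b"] by (simp add: scalar_minus)

lemma mult_scalar_left_commute: "x * (\<iota> s * y) = \<iota> s * (x * y)"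
  by (metis mult.assoc scalar_central)

lemma qsmul_qsmul [simp]: "qsmul a (qsmul b x) = qsmul (a + b) x"
  by (simp add: qsmul_def mult.assoc[symmetric] scalar_mult[symmetric] power_int_add qq_nonzero)

lemma qsmul_0 [simp]: "qsmul 0 x = x"
  by (simp add: qsmul_def scalar_one)

lemma mult_qsmul [simp]: "x * qsmul k y = qsmul k (x * y)"
  by (simp add: qsmul_def mult_scalar_left_commute)

lemma qsmul_mult [simp]: "qsmul k x * y = qsmul k (x * y)"
  by (simp add: qsmul_def mult.assoc)

lemma qsmul_add [simp]: "qsmul k (x + y) = qsmul k x + qsmul k y"
  by (simp add: qsmul_def distrib_left)

lemma qsmul_diff [simp]: "qsmul k (x - y) = qsmul k x - qsmul k y"
  by (simp add: qsmul_def right_diff_distrib)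

lemma qsmul_minus [simp]: "qsmul k (- x) = - qsmul k x"
  by (simp add: qsmul_def)

lemma qsmul_zero [simp]: "qsmul k 0 = 0"
  by (simp add: qsmul_def)

lemma smul_smul [simp]: "smul s (smul t x) = smul (s * t) x"
  by (simp add: smul_def mult.assoc[symmetric] scalar_mult[symmetric])

lemma smul_1 [simp]: "smul 1 x = x"
  by (simp add: smul_def scalar_one)

lemma mult_smul [simp]: "x * smul s y = smul s (x * y)"
  by (simp add: smul_def mult_scalar_left_commute)

lemma smul_mult [simp]: "smul s x * y = smul s (x * y)"
  by (simp add: smul_def mult.assoc)

lemma smul_add [simp]: "smul s (x + y) = smul s x + smul s y"
  by (simp add: smul_def distrib_left)

lemma smul_diff [simp]: "smul s (x - y) = smul s x - smul s y"
  by (simp add: smul_def right_diff_distrib)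

lemma smul_minus [simp]: "smul s (- x) = - smul s x"
  by (simp add: smul_def)

lemma smul_zero [simp]: "smul s 0 = 0"
  by (simp add: smul_def)

lemma qsmul_smul [simp]: "qsmul k (smul s x) = smul s (qsmul k x)"
  by (simp add: smul_def qsmul_def mult.assoc[symmetric] scalar_mult[symmetric] mult.commute)

lemma qsmul_eq_smul: "qsmul k x = smul (qq powi k) x"
  by (simp add: qsmul_def smul_def)

lemma smul_add_scalars: "smul s x + smul t x = smul (s + t) x"
  by (simp add: smul_def scalar_add distrib_right)

lemma smul_diff_scalars: "smul s x - smul t x = smul (s - t) x"
  by (simp add: smul_def scalar_diff left_diff_distrib)

lemma qbr_smul: "qbr \<iota> c a b = a * b - smul c (b * a)"
  by (simp add: qbr_def smul_def)

lemma qbr_qinverse: "qbr \<iota> (inverse qq) a b = a * b - qsmul (- 1) (b * a)"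
  by (simp add: qbr_def qsmul_def power_int_minus)

lemma qbr_qq: "qbr \<iota> qq a b = a * b - qsmul 1 (b * a)"
  by (simp add: qbr_def qsmul_def)

lemma kappa_times_qq_diff: "kappa * (qq - inverse qq) = (1 :: 'k scal)"
  by (rule left_inverse[OF qq_minus_inverse_nonzero])

lemma kappa_square_qsmul:
  "smul (kappa * kappa) (qsmul 1 x) = smul kappa x + smul (kappa * kappa) (qsmul (- 1) x)"
proof -
  have "kappa * kappa * (qq - inverse qq) = (kappa :: 'k scal)"
    using kappa_times_qq_diff by (metis mult.assoc mult_1_right)
  then have "kappa * kappa * qq = kappa + kappa * kappa * inverse (qq :: 'k scal)"
    by (simp add: algebra_simps)
  then show ?thesis
    by (simp add: qsmul_eq_smul smul_add_scalars power_int_minus)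
qed

lemma kappa_qsmul_minus_two: "smul kappa (x - qsmul (- 2) x) = qsmul (- 1) x"
proof -
  have "kappa - kappa * inverse (qq ^ 2) = kappa * (qq - inverse qq) * inverse (qq :: 'k scal)"
    using qq_nonzero[where 'k = 'k] by (simp add: algebra_simps power2_eq_square)
  then have "kappa - kappa * inverse (qq ^ 2) = inverse (qq :: 'k scal)"
    by (simp only: kappa_times_qq_diff mult_1_left)
  then show ?thesis
    by (simp add: qsmul_eq_smul smul_diff_scalars power_int_minus)
qed

lemma kappa_qsmul_diff: "smul kappa (qsmul (- 1) x - qsmul 1 x) = - x"
proof -
  have "smul kappa (qsmul (- 1) x - qsmul 1 x) = smul (- (kappa * (qq - inverse qq))) x"
    by (simp add: qsmul_eq_smul smul_diff_scalars power_int_minus algebra_simps)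
  then show ?thesis
    by (simp add: kappa_times_qq_diff smul_def scalar_minus scalar_one)
qed

lemma qbr_assoc_of_commute:
  assumes "x * z = z * x"
  shows "qbr \<iota> c x (qbr \<iota> c y z) = qbr \<iota> c (qbr \<iota> c x y) z"
proof -
  have "x * (z * w) = z * (x * w)" for w
    by (simp add: mult.assoc[symmetric] assms)
  then show ?thesis
    by (simp add: qbr_smul algebra_simps assms)
qed

lemma qcommute_qbr:
  assumes "w * x = qsmul a (x * w)" "w * y = qsmul b (y * w)"
  shows "w * qbr \<iota> c x y = qsmul (a + b) (qbr \<iota> c x y * w)"
proof -
  have "w * (x * u) = qsmul a (x * (w * u))" "w * (y * u) = qsmul b (y * (w * u))" for u
    by (simp_all add: mult.assoc[symmetric] assms)
  then show ?thesis
    by (simp add: qbr_smul algebra_simps assms add.commute)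
qed

lemma commute_qbr:
  assumes "w * x = x * w" "w * y = y * w"
  shows "w * qbr \<iota> c x y = qbr \<iota> c x y * w"
  using qcommute_qbr[of w x 0 y 0 c] assms by simp

lemma nestbr_single [simp]: "nestbr \<iota> c f [x] = f x"
  by (simp add: nestbr_def)

lemma nestbr_Cons: "xs \<noteq> [] \<Longrightarrow> nestbr \<iota> c f (x # xs) = qbr \<iota> c (f x) (nestbr \<iota> c f xs)"
  by (simp add: nestbr_def)

lemma qcommute_nestbr:
  assumes "xs \<noteq> []" "\<And>i. i \<in> set xs \<Longrightarrow> y * f i = qsmul (g i) (f i * y)"
  shows "y * nestbr \<iota> c f xs = qsmul (sum_list (map g xs)) (nestbr \<iota> c f xs * y)"
  using assms
proof (induction xs)
  case (Cons x xs)
  then show ?case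
    by (cases "xs = []") (simp_all add: nestbr_Cons qcommute_qbr)
qed simp

lemma commute_nestbr:
  assumes "xs \<noteq> []" "\<And>i. i \<in> set xs \<Longrightarrow> y * f i = f i * y"
  shows "y * nestbr \<iota> c f xs = nestbr \<iota> c f xs * y"
  using qcommute_nestbr[of xs y f "\<lambda>_. 0" c] assms by simp

lemma nestbr_snoc:
  assumes "xs \<noteq> []" "\<And>i. i \<in> set (butlast xs) \<Longrightarrow> f i * f t = f t * f i"
  shows "nestbr \<iota> c f (xs @ [t]) = qbr \<iota> c (nestbr \<iota> c f xs) (f t)"
  using assms
proof (induction xs)
  case (Cons x xs)
  show ?case
  proof (cases "xs = []")
    case False
    then have "nestbr \<iota> c f ((x # xs) @ [t]) = qbr \<iota> c (f x) (qbr \<iota> c (nestbr \<iota> c f xs) (f t))"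
      using Cons by (simp add: nestbr_Cons)
    also have "\<dots> = qbr \<iota> c (nestbr \<iota> c f (x # xs)) (f t)"
      using Cons.prems False by (simp add: nestbr_Cons qbr_assoc_of_commute)
    finally show ?thesis .
  qed (simp add: nestbr_Cons)
qed simp

lemma nestbr_map: "xs \<noteq> [] \<Longrightarrow> nestbr \<iota> c (f \<circ> g) xs = nestbr \<iota> c f (map g xs)"
  by (simp add: nestbr_def map_butlast[symmetric] last_map foldr_map o_def)

lemma serre_qbr_commute:
  assumes ca: "c * a = a * c"
    and serre_c: "b * b * c - qsmul 1 (b * c * b) - qsmul (- 1) (b * c * b) + c * b * b = 0"
    and serre_a: "b * b * a - qsmul 1 (b * a * b) - qsmul (- 1) (b * a * b) + a * b * b = 0"
  shows "qbr \<iota> (inverse qq) b c * qbr \<iota> (inverse qq) b a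
      = qbr \<iota> (inverse qq) b a * qbr \<iota> (inverse qq) b c"
proof -
  let ?X = "qbr \<iota> (inverse qq) b c * qbr \<iota> (inverse qq) b a - qbr \<iota> (inverse qq) b a * qbr \<iota> (inverse qq) b c"
  let ?Sc = "b * b * c - qsmul 1 (b * c * b) - qsmul (- 1) (b * c * b) + c * b * b"
  let ?Sa = "b * b * a - qsmul 1 (b * a * b) - qsmul (- 1) (b * a * b) + a * b * b"
  have ca': "c * (a * y) = a * (c * y)" for y
    by (simp add: mult.assoc[symmetric] ca)
  have "smul (qq + inverse qq) ?X = qsmul 1 ?X + qsmul (- 1) ?X"
    by (simp only: qsmul_eq_smul smul_add_scalars) (simp add: power_int_minus)
  also have "\<dots> = qsmul (- 2) (a * ?Sc) - ?Sc * a - qsmul (- 2) (c * ?Sa) + ?Sa * c"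
    by (simp add: qbr_qinverse algebra_simps ca ca')
  also have "\<dots> = 0"
    by (simp add: serre_a serre_c)
  finally have "smul (inverse (qq + inverse qq) * (qq + inverse qq)) ?X = 0"
    by (metis smul_smul smul_zero)
  then show ?thesis
    by (simp add: qq_plus_inverse_nonzero)
qed

text \<open>The induction step of \<open>Froot_Eroot_rev_commutator\<close>, with \<open>A = F\<^sub>s\<^sub>.\<^sub>.\<^sub>t\<close>,
  \<open>B = F\<^sub>t\<^sub>+\<^sub>1\<close>, \<open>C = E\<^sub>t\<^sub>+\<^sub>1\<close> and \<open>D = E\<^sub>t\<^sub>.\<^sub>.\<^sub>s\<close>.\<close>

lemma commutator_qbr_qbr:
  assumes AC: "A * C = C * A" and BD: "B * D = D * B"
    and AD: "A * D = D * A - smul kappa (KA - KA')" and BC: "B * C = C * B - smul kappa (KB - KB')"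
    and KA_B: "KA * B = qsmul 1 (B * KA)" and KA'_B: "KA' * B = qsmul (- 1) (B * KA')"
    and KA_C: "KA * C = qsmul (- 1) (C * KA)" and KA'_C: "KA' * C = qsmul 1 (C * KA')"
    and KB_A: "KB * A = qsmul 1 (A * KB)" and KB'_A: "KB' * A = qsmul (- 1) (A * KB')"
    and KB_D: "KB * D = qsmul (- 1) (D * KB)" and KB'_D: "KB' * D = qsmul 1 (D * KB')"
    and KB_KA: "KB * KA = KA * KB" and KB'_KA: "KB' * KA = KA * KB'"
  shows "qbr \<iota> qq A B * qbr \<iota> (inverse qq) C D - qbr \<iota> (inverse qq) C D * qbr \<iota> qq A B
       = - smul kappa (KA * KB - KA' * KB')"
proof -
  have assoc_rules: "A * (C * y) = C * (A * y)" "B * (D * y) = D * (B * y)"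
    "A * (D * y) = D * (A * y) - smul kappa (KA * y - KA' * y)"
    "B * (C * y) = C * (B * y) - smul kappa (KB * y - KB' * y)"
    "KA * (B * y) = qsmul 1 (B * (KA * y))" "KA' * (B * y) = qsmul (- 1) (B * (KA' * y))"
    "KA * (C * y) = qsmul (- 1) (C * (KA * y))" "KA' * (C * y) = qsmul 1 (C * (KA' * y))"
    "KB * (A * y) = qsmul 1 (A * (KB * y))" "KB' * (A * y) = qsmul (- 1) (A * (KB' * y))"
    "KB * (D * y) = qsmul (- 1) (D * (KB * y))" "KB' * (D * y) = qsmul 1 (D * (KB' * y))" for y
    using assms by (simp_all add: mult.assoc[symmetric] left_diff_distrib)
  show ?thesis
    by (simp add: qbr_qq qbr_qinverse algebra_simps assms assoc_rules kappa_square_qsmul)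
qed

lemma qbr_qinverse_commute_right:
  assumes "u * b = qsmul (- 1) (b * u)"
  shows "b * qbr \<iota> (inverse qq) a u - qbr \<iota> (inverse qq) a u * b
       = qbr \<iota> (inverse qq) b a * u - u * qbr \<iota> (inverse qq) b a"
proof -
  have "u * (b * y) = qsmul (- 1) (b * (u * y))" for y
    using assms by (simp add: mult.assoc[symmetric])
  then show ?thesis
    by (simp add: qbr_qinverse algebra_simps assms)
qed

lemma commute_qbr_of_qcommute:
  assumes Pe: "P * e = qsmul (- 1) (e * P)"
    and eR: "e * qbr \<iota> (inverse qq) x P = qbr \<iota> (inverse qq) x P * e"
  shows "P * qbr \<iota> (inverse qq) e x = qbr \<iota> (inverse qq) e x * P"
proof -
  have eP: "e * (P * y) = qsmul 1 (P * (e * y))" for y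
    using Pe by (simp add: mult.assoc[symmetric])
  have "e * (x * P) = x * (P * e) - qsmul (- 1) (P * (x * e)) + qsmul (- 1) (e * (P * x))"
    using eR by (simp add: qbr_qinverse algebra_simps)
  then show ?thesis
    by (simp add: qbr_qinverse algebra_simps Pe eP)
qed

lemma commute_diff_smul:
  assumes "x1 * y1 = y1 * x1" "x1 * y2 = y2 * x1" "x2 * y1 = y1 * x2" "x2 * y2 = y2 * x2"
  shows "(x1 - smul s x2) * (y1 - smul t y2) = (y1 - smul t y2) * (x1 - smul s x2)"
  using assms by (simp add: algebra_simps)

lemma commute_mult_qcommute:
  assumes "x * y = y * x" "K1 * y = qsmul k (y * K1)" "K2 * x = qsmul k (x * K2)" "K1 * K2
      = K2 * K1"
  shows "(x * K1) * (y * K2) = (y * K2) * (x * K1)"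
proof -
  have "K1 * (y * z) = qsmul k (y * (K1 * z))" "K2 * (x * z) = qsmul k (x * (K2 * z))" for z
    using assms(2,3) by (simp_all add: mult.assoc[symmetric])
  then have "(x * K1) * (y * K2) = qsmul k (x * y * (K1 * K2))" "(y * K2) * (x * K1)
      = qsmul k (y * x * (K2 * K1))"
    by (simp_all add: mult.assoc)
  then show ?thesis
    by (simp only: assms(1,4))
qed

lemma commutator_diff_smul:
  "(x1 - smul s x2) * (y1 - smul t y2) - (y1 - smul t y2) * (x1 - smul s x2) =
   (x1 * y1 - y1 * x1) - smul t (x1 * y2 - y2 * x1) - smul s (x2 * y1 - y1 * x2) + smul (s * t) (x2 * y2 - y2 * x2)"
  by (simp add: algebra_simps)

lemma qbr_commutator:
  assumes Fe: "F' * e = e * F'" and EF: "E' * F' - F' * E' = smul kappa (K' - K'')"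
    and K'e: "K' * e = qsmul (- 1) (e * K')" and K''e: "K'' * e = qsmul 1 (e * K'')"
  shows "qbr \<iota> (inverse qq) e E' * F' - F' * qbr \<iota> (inverse qq) e E' = qsmul (- 1) (e * K')"
proof -
  have "F' * (e * y) = e * (F' * y)" for y
    by (simp add: mult.assoc[symmetric] Fe)
  then have "qbr \<iota> (inverse qq) e E' * F' - F' * qbr \<iota> (inverse qq) e E'
      = e * (E' * F' - F' * E') - qsmul (- 1) ((E' * F' - F' * E') * e)"
    by (simp add: qbr_qinverse algebra_simps Fe)
  also have "\<dots> = smul kappa (e * K' - qsmul (- 2) (e * K'))"
    unfolding EF by (simp add: algebra_simps K'e K''e)
  finally show ?thesis
    by (simp only: kappa_qsmul_minus_two)
qed

lemma qcommute_diff_smul_mult: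
  assumes "z * x1 = qsmul k (x1 * z)" "z * x2 = qsmul a (x2 * z)" "z * y = qsmul b (y * z)"
    and "a + b = k"
  shows "z * (x1 - smul s (x2 * y)) = qsmul k ((x1 - smul s (x2 * y)) * z)"
proof -
  have "z * (x2 * y) = qsmul k ((x2 * y) * z)"
    using assms(2-4) by (simp add: mult.assoc[symmetric]) (simp add: mult.assoc)
  then show ?thesis
    using assms(1) by (simp add: algebra_simps)
qed

lemma commute_commutator:
  fixes a x y :: 'a
  assumes "a * x = x * a" "a * y = y * a"
  shows "a * (x * y - y * x) = (x * y - y * x) * a"
proof -
  have "a * (x * y) = x * y * a"
    by (simp only: mult.assoc[symmetric] assms(1)) (simp only: mult.assoc assms(2))
  moreover have "a * (y * x) = y * x * a"
    by (simp only: mult.assoc[symmetric] assms(2)) (simp only: mult.assoc assms(1))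
  ultimately show ?thesis
    unfolding right_diff_distrib left_diff_distrib by (simp only:)
qed

lemma commutator_right_factor:
  assumes "L * f = f * L" "L' * f = f * L'"
  shows "f * (smul t (qsmul k (e * L)) - smul u (qsmul k (e' * L')))
      - (smul t (qsmul k (e * L)) - smul u (qsmul k (e' * L'))) * f
    = smul t (qsmul k ((f * e - e * f) * L)) - smul u (qsmul k ((f * e' - e' * f) * L'))"
  by (simp add: algebra_simps assms)

lemma qbr_qq_nested_rearrange:
  assumes "a * d = d * a"
  shows "qbr \<iota> qq a (qbr \<iota> qq b (qbr \<iota> qq f d)) = qbr \<iota> qq (qbr \<iota> qq a (qbr \<iota> qq b f)) d
    + qsmul 1 (qbr \<iota> qq a (f * (b * d - d * b) - (b * d - d * b) * f))"
proof -
  have "a * (d * y) = d * (a * y)" for y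
    by (simp add: mult.assoc[symmetric] assms)
  then show ?thesis
    by (simp add: qbr_qq algebra_simps assms)
qed

lemma qbr_qq_remainder:
  assumes aY: "a * Y = Y * a" and aL': "a * L' = qsmul 1 (L' * a)" and aD: "a * D = D * a"
    and aL: "a * L = qsmul (- 1) (L * a)" and DL: "D * L = L * D"
  shows "qbr \<iota> qq a (smul s (qsmul (- 1) (- smul kappa D * L)) - smul t (qsmul (- 1) (Y * L')))
    = smul s (a * L * D)"
proof -
  have "a * (Y * y) = Y * (a * y)" "a * (D * y) = D * (a * y)" for y
    by (simp_all add: mult.assoc[symmetric] aY aD)
  then have YL': "qbr \<iota> qq a (Y * L') = 0"
    and DL': "qbr \<iota> qq a (D * L) = qsmul (- 1) (D * L * a) - qsmul 1 (D * L * a)"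
    by (simp_all add: qbr_qq aL' aL mult.assoc)
  have "qbr \<iota> qq a (smul s (qsmul (- 1) (- smul kappa D * L)) - smul t (qsmul (- 1) (Y * L')))
      = - smul s (qsmul (- 1) (smul kappa (qbr \<iota> qq a (D * L)))) - smul t (qsmul (- 1) (qbr \<iota> qq a (Y * L')))"
    by (simp add: qbr_qq algebra_simps)
  also have "\<dots> = smul s (qsmul (- 1) (D * L * a))"
    unfolding YL' DL' kappa_qsmul_diff by simp
  also have "\<dots> = smul s (a * L * D)"
    by (simp add: aL mult.assoc[symmetric] DL) (simp add: mult.assoc aD)
  finally show ?thesis .
qed

end

section \<open>Weights and the diagram automorphism\<close>

lemma sum_fun_apply: "(\<Sum>a\<in>A. f a) x = (\<Sum>a\<in>A. f a x)"
  by (induct A rule: infinite_finite_induct) auto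

lemma sum_list_map_interval: "sum_list (map f [s..<Suc t]) = (\<Sum>i\<in>{s..t}. f i)"
  by (simp add: sum_set_upt_conv_sum_list_nat[symmetric] atLeastLessThanSuc_atLeastAtMost del: upt_Suc)

lemma alpha_wts [simp]: "alpha n i \<in> wts n"
  by (simp add: wts_def alpha_def)

lemma wts_add [simp]: "\<mu> \<in> wts n \<Longrightarrow> \<nu> \<in> wts n \<Longrightarrow> \<mu> + \<nu> \<in> wts n"
  by (simp add: wts_def)

lemma wts_uminus [simp]: "\<mu> \<in> wts n \<Longrightarrow> - \<mu> \<in> wts n"
  by (simp add: wts_def)

lemma wts_diff [simp]: "\<mu> \<in> wts n \<Longrightarrow> \<nu> \<in> wts n \<Longrightarrow> \<mu> - \<nu> \<in> wts n"
  by (simp add: wts_def)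

lemma wts_sum [simp]: "(\<And>j. j \<in> A \<Longrightarrow> f j \<in> wts n) \<Longrightarrow> (\<Sum>j\<in>A. f j) \<in> wts n"
  by (induct A rule: infinite_finite_induct) (auto simp: wts_def sum_fun_apply)

lemma alpha_sym: "i \<in> {1..n} \<Longrightarrow> j \<in> {1..n} \<Longrightarrow> alpha n j i = alpha n i j"
  by (auto simp: alpha_def)

lemma sum_alpha:
  assumes "1 \<le> s"
  shows "t \<le> n \<Longrightarrow> (\<Sum>i\<in>{s..t}. alpha n j i) =
    (if s \<le> j \<and> j \<le> t then 2 else 0) - (if s \<le> j + 1 \<and> j + 1 \<le> t then 1 else 0)
    - (if s + 1 \<le> j \<and> j \<le> t + 1 then 1 else 0)"
proof (induction t)
  case (Suc t)
  show ?case
  proof (cases "Suc t < s")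
    case False
    then have "{s..Suc t} = insert (Suc t) {s..t}"
      by auto
    then show ?thesis
      using Suc assms False by (simp add: alpha_def)
  qed auto
qed (use assms in auto)

lemma tau_tau: "i \<in> {1..n} \<Longrightarrow> tau n (tau n i) = i"
  by (auto simp: tau_def)

lemma tau_range: "i \<in> {1..n} \<Longrightarrow> tau n i \<in> {1..n}"
  by (auto simp: tau_def)

lemma tau_eq_iff: "i \<in> {1..n} \<Longrightarrow> j \<in> {1..n} \<Longrightarrow> tau n i = tau n j \<longleftrightarrow> i = j"
  by (auto simp: tau_def)

lemma wts_comp_tau: "\<mu> \<in> wts n \<Longrightarrow> \<mu> \<circ> tau n \<in> wts n"
proof -
  have "tau n j \<notin> {1..n}" if "j \<notin> {1..n}" for j
    using that by (auto simp: tau_def)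
  then show "\<mu> \<in> wts n \<Longrightarrow> \<mu> \<circ> tau n \<in> wts n"
    by (auto simp: wts_def)
qed

lemma alpha_comp_tau: "i \<in> {1..n} \<Longrightarrow> alpha n i \<circ> tau n = alpha n (tau n i)"
  by (auto simp: fun_eq_iff alpha_def tau_def)

lemma uminus_comp: "(- \<mu>) \<circ> g = - (\<mu> \<circ> g)"
  by (auto simp: fun_eq_iff)

section \<open>The defining relations and root vectors\<close>

locale Uq_algebra =
  fixes n :: nat and \<iota> :: "'k::field_char_0 scal \<Rightarrow> 'a::ring_1"
    and E F :: "nat \<Rightarrow> 'a" and K :: "wt \<Rightarrow> 'a"
  assumes rels: "Uq_rels n \<iota> E F K"

sublocale Uq_algebra \<subseteq> central_scalars \<iota>
proof -
  have "\<iota> 1 = 1 \<and> (\<forall>a b. \<iota> (a + b) = \<iota> a + \<iota> b) \<and> (\<forall>a b. \<iota> (a * b) = \<iota> a * \<iota> b)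
    \<and> (\<forall>s x. \<iota> s * x = x * \<iota> s)"
    using rels unfolding Uq_rels_def by (elim conjE) (intro conjI; assumption)
  then show "central_scalars \<iota>"
    by unfold_locales blast+
qed

context Uq_algebra
begin

lemma K_zero: "K 0 = 1"
  using rels unfolding Uq_rels_def by (elim conjE)

lemma K_add: "\<mu> \<in> wts n \<Longrightarrow> \<nu> \<in> wts n \<Longrightarrow> K \<mu> * K \<nu> = K (\<mu> + \<nu>)"
  using rels unfolding Uq_rels_def by (elim conjE) blast

lemma K_E:
  assumes "\<mu> \<in> wts n" "i \<in> {1..n}"
  shows "K \<mu> * E i = qsmul (\<mu> i) (E i * K \<mu>)"
proof -
  have "K \<mu> * E i = \<iota> (qq powi (\<mu> i)) * E i * K \<mu>"
    using rels assms unfolding Uq_rels_def by (elim conjE) blast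
  then show ?thesis
    by (simp add: qsmul_def mult.assoc)
qed

lemma K_F:
  assumes "\<mu> \<in> wts n" "i \<in> {1..n}"
  shows "K \<mu> * F i = qsmul (- \<mu> i) (F i * K \<mu>)"
proof -
  have "K \<mu> * F i = \<iota> (qq powi (- \<mu> i)) * F i * K \<mu>"
    using rels assms unfolding Uq_rels_def by (elim conjE) blast
  then show ?thesis
    by (simp add: qsmul_def mult.assoc)
qed

lemma E_F_relation:
  "i \<in> {1..n} \<Longrightarrow> j \<in> {1..n} \<Longrightarrow> E i * F j - F j * E i =
     (if i = j then smul kappa (K (alpha n i) - K (- alpha n i)) else 0)"
  using rels unfolding Uq_rels_def smul_def by (elim conjE) blast

lemma E_F_commutator:
  "i \<in> {1..n} \<Longrightarrow> E i * F i - F i * E i = smul kappa (K (alpha n i) - K (- alpha n i))"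
  using E_F_relation[of i i] by simp

lemma E_F_commute: "i \<in> {1..n} \<Longrightarrow> j \<in> {1..n} \<Longrightarrow> i \<noteq> j \<Longrightarrow> E i * F j = F j * E i"
  using E_F_relation[of i j] by simp

lemma E_F_serre:
  assumes "i \<in> {1..n}" "j \<in> {1..n}" "i + 1 = j \<or> j + 1 = i"
  shows "E i * E i * E j - \<iota> (qq + inverse qq) * (E i * E j * E i) + E j * E i * E i = 0 \<and>
    F i * F i * F j - \<iota> (qq + inverse qq) * (F i * F j * F i) + F j * F i * F i = 0"
  using rels assms unfolding Uq_rels_def by (elim conjE) blast

lemma E_serre:
  assumes "i \<in> {1..n}" "j \<in> {1..n}" "i + 1 = j \<or> j + 1 = i"
  shows "E i * E i * E j - qsmul 1 (E i * E j * E i) - qsmul (- 1) (E i * E j * E i) + E j * E i * E i = 0"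
proof -
  have "E i * E i * E j - \<iota> (qq + inverse qq) * (E i * E j * E i) + E j * E i * E i = 0"
    using E_F_serre[OF assms] ..
  then show ?thesis
    by (simp add: qsmul_def scalar_add distrib_right power_int_minus diff_diff_eq mult.assoc)
qed

lemma E_far_commute: "i \<in> {1..n} \<Longrightarrow> j \<in> {1..n} \<Longrightarrow> i + 1 < j \<or> j + 1 < i \<Longrightarrow> E i * E j = E j * E i"
  using rels unfolding Uq_rels_def by (elim conjE) blast

lemma F_far_commute: "i \<in> {1..n} \<Longrightarrow> j \<in> {1..n} \<Longrightarrow> i + 1 < j \<or> j + 1 < i \<Longrightarrow> F i * F j = F j * F i"
  using rels unfolding Uq_rels_def by (elim conjE) blast

lemma K_commute: "\<mu> \<in> wts n \<Longrightarrow> \<nu> \<in> wts n \<Longrightarrow> K \<mu> * K \<nu> = K \<nu> * K \<mu>"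
  by (simp add: K_add add.commute)

lemma twist_K_E_F:
  assumes "\<mu> \<in> wts n" "i \<in> {1..n}"
  shows "K (\<mu> \<circ> tau n) * (E \<circ> tau n) i = \<iota> (qq powi \<mu> i) * (E \<circ> tau n) i * K (\<mu> \<circ> tau n)"
    and "K (\<mu> \<circ> tau n) * (F \<circ> tau n) i = \<iota> (qq powi (- \<mu> i)) * (F \<circ> tau n) i * K (\<mu> \<circ> tau n)"
  using K_E[OF wts_comp_tau tau_range] K_F[OF wts_comp_tau tau_range] assms
  by (simp_all add: tau_tau qsmul_def mult.assoc)

lemma twist_E_F:
  assumes "i \<in> {1..n}" "j \<in> {1..n}"
  shows "(E \<circ> tau n) i * (F \<circ> tau n) j - (F \<circ> tau n) j * (E \<circ> tau n) i =
    (if i = j then \<iota> kappa * (K (alpha n i \<circ> tau n) - K (- alpha n i \<circ> tau n)) else 0)"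
  using E_F_relation[OF tau_range tau_range] assms
  by (simp add: tau_eq_iff alpha_comp_tau uminus_comp smul_def)

lemma twist_serre:
  assumes "i \<in> {1..n}" "j \<in> {1..n}" "i + 1 = j \<or> j + 1 = i"
  shows "(E \<circ> tau n) i * (E \<circ> tau n) i * (E \<circ> tau n) j
      - \<iota> (qq + inverse qq) * ((E \<circ> tau n) i * (E \<circ> tau n) j * (E \<circ> tau n) i)
      + (E \<circ> tau n) j * (E \<circ> tau n) i * (E \<circ> tau n) i = 0 \<and>
    (F \<circ> tau n) i * (F \<circ> tau n) i * (F \<circ> tau n) j
      - \<iota> (qq + inverse qq) * ((F \<circ> tau n) i * (F \<circ> tau n) j * (F \<circ> tau n) i)
      + (F \<circ> tau n) j * (F \<circ> tau n) i * (F \<circ> tau n) i = 0"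
proof -
  have "tau n i + 1 = tau n j \<or> tau n j + 1 = tau n i"
    using assms by (auto simp: tau_def)
  from E_F_serre[OF tau_range[OF assms(1)] tau_range[OF assms(2)] this] show ?thesis
    by simp
qed

lemma twist_far_commute:
  assumes "i \<in> {1..n}" "j \<in> {1..n}" "i + 1 < j \<or> j + 1 < i"
  shows "(E \<circ> tau n) i * (E \<circ> tau n) j = (E \<circ> tau n) j * (E \<circ> tau n) i \<and>
    (F \<circ> tau n) i * (F \<circ> tau n) j = (F \<circ> tau n) j * (F \<circ> tau n) i"
proof -
  have "tau n i + 1 < tau n j \<or> tau n j + 1 < tau n i"
    using assms by (auto simp: tau_def)
  from E_far_commute[OF tau_range[OF assms(1)] tau_range[OF assms(2)] this]
    F_far_commute[OF tau_range[OF assms(1)] tau_range[OF assms(2)] this]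
  show ?thesis
    by simp
qed

lemma twist_rels: "Uq_rels n \<iota> (E \<circ> tau n) (F \<circ> tau n) (\<lambda>\<mu>. K (\<mu> \<circ> tau n))"
proof -
  have "(0 :: wt) \<circ> tau n = 0" "\<And>\<mu> \<nu> :: wt. (\<mu> + \<nu>) \<circ> tau n = (\<mu> \<circ> tau n) + (\<nu> \<circ> tau n)"
    by (auto simp: fun_eq_iff)
  then have "K (0 \<circ> tau n) = 1" "\<forall>\<mu>\<in>wts n. \<forall>\<nu>\<in>wts n. K (\<mu> \<circ> tau n) * K (\<nu> \<circ> tau n)
      = K ((\<mu> + \<nu>) \<circ> tau n)"
    by (simp_all add: K_zero K_add wts_comp_tau)
  then show ?thesis
    unfolding Uq_rels_def
    using scalar_one scalar_add scalar_mult scalar_central twist_K_E_F twist_E_F twist_serre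
        twist_far_commute
    by (intro conjI) blast+
qed

definition Eroot :: "nat \<Rightarrow> nat \<Rightarrow> 'a" where
  "Eroot s t = nestbr \<iota> (inverse qq) E [s..<Suc t]"

definition Eroot_rev :: "nat \<Rightarrow> nat \<Rightarrow> 'a" where
  "Eroot_rev s t = nestbr \<iota> (inverse qq) E (rev [s..<Suc t])"

definition Froot :: "nat \<Rightarrow> nat \<Rightarrow> 'a" where
  "Froot s t = nestbr \<iota> qq F [s..<Suc t]"

definition root_sum :: "nat \<Rightarrow> nat \<Rightarrow> wt" where
  "root_sum s t = (\<Sum>j\<in>{s..t}. alpha n j)"

lemma Eroot_single [simp]: "Eroot s s = E s"
  by (simp add: Eroot_def)

lemma Eroot_Cons: "s < t \<Longrightarrow> Eroot s t = qbr \<iota> (inverse qq) (E s) (Eroot (Suc s) t)"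
  by (simp add: Eroot_def upt_conv_Cons nestbr_Cons)

lemma Eroot_snoc:
  assumes "1 \<le> s" "s < t" "t \<le> n"
  shows "Eroot s t = qbr \<iota> (inverse qq) (Eroot s (t - 1)) (E t)"
proof -
  have split: "[s..<Suc t] = [s..<Suc (t - 1)] @ [t]"
    using assms by simp
  have "nestbr \<iota> (inverse qq) E ([s..<Suc (t - 1)] @ [t])
      = qbr \<iota> (inverse qq) (nestbr \<iota> (inverse qq) E [s..<Suc (t - 1)]) (E t)"
  proof (rule nestbr_snoc)
    fix i
    assume "i \<in> set (butlast [s..<Suc (t - 1)])"
    then have "s \<le> i" "i + 1 < t"
      using assms by (cases t; auto split: if_splits)+
    then show "E i * E t = E t * E i"
      using assms by (intro E_far_commute) auto
  qed (use assms in simp)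
  then show ?thesis
    unfolding Eroot_def split .
qed

lemma Eroot_commute:
  "s \<le> t \<Longrightarrow> (\<And>i. i \<in> {s..t} \<Longrightarrow> y * E i = E i * y) \<Longrightarrow> y * Eroot s t = Eroot s t * y"
  unfolding Eroot_def by (rule commute_nestbr) auto

lemma E_Eroot_pair:
  assumes "1 \<le> s" "Suc s \<le> n"
  shows "E s * Eroot s (Suc s) = qsmul 1 (Eroot s (Suc s) * E s)"
proof -
  have "E s * E s * E (Suc s) - qsmul 1 (E s * E (Suc s) * E s) - qsmul (- 1) (E s * E (Suc s) * E s)
      + E (Suc s) * E s * E s = 0"
    using assms by (intro E_serre) auto
  then show ?thesis
    by (simp add: Eroot_Cons qbr_qinverse algebra_simps)
qed

lemma E_Eroot_first:
  assumes "1 \<le> s" "s < t" "t \<le> n"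
  shows "E s * Eroot s t = qsmul 1 (Eroot s t * E s)"
proof (cases "t = Suc s")
  case False
  then have t: "Suc (Suc s) \<le> t"
    using assms by simp
  have comm: "E s * Eroot (Suc (Suc s)) t = Eroot (Suc (Suc s)) t * E s"
    using assms t by (intro Eroot_commute) (auto intro!: E_far_commute)
  then have far: "E s * Eroot (Suc (Suc s)) t = qsmul 0 (Eroot (Suc (Suc s)) t * E s)"
    by simp
  have "Eroot s t = qbr \<iota> (inverse qq) (E s) (qbr \<iota> (inverse qq) (E (Suc s)) (Eroot (Suc (Suc s)) t))"
    using t by (simp add: Eroot_Cons)
  also have "\<dots> = qbr \<iota> (inverse qq) (Eroot s (Suc s)) (Eroot (Suc (Suc s)) t)"
    using comm by (simp add: Eroot_Cons qbr_assoc_of_commute)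
  finally show ?thesis
    using qcommute_qbr[OF E_Eroot_pair far] assms t by simp
qed (use assms E_Eroot_pair in simp)

lemma E_Eroot_second:
  assumes "1 \<le> s" "Suc (Suc s) \<le> t"
  shows "t \<le> n \<Longrightarrow> E (Suc s) * Eroot s t = Eroot s t * E (Suc s)"
  using assms(2)
proof (induction t rule: dec_induct)
  case base
  let ?a = "E s" and ?b = "E (Suc s)" and ?c = "E (Suc (Suc s))"
  have "qbr \<iota> (inverse qq) ?b ?c * qbr \<iota> (inverse qq) ?b ?a
      = qbr \<iota> (inverse qq) ?b ?a * qbr \<iota> (inverse qq) ?b ?c"
    using base assms by (intro serre_qbr_commute E_far_commute E_serre) auto
  moreover have "qbr \<iota> (inverse qq) ?b ?c * ?b = qsmul (- 1) (?b * qbr \<iota> (inverse qq) ?b ?c)"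
    using E_Eroot_pair[of "Suc s"] base assms by (simp add: Eroot_Cons)
  ultimately show ?case
    using qbr_qinverse_commute_right[of "qbr \<iota> (inverse qq) ?b ?c" ?b ?a]
    by (simp add: Eroot_Cons)
next
  case (step t)
  have "E (Suc s) * E (Suc t) = E (Suc t) * E (Suc s)"
    using step assms by (intro E_far_commute) auto
  then show ?case
    using step assms Eroot_snoc[of s "Suc t"] commute_qbr by simp
qed

lemma E_Eroot_inner:
  assumes "1 \<le> s" "s < j" "j < t" "t \<le> n"
  shows "E j * Eroot s t = Eroot s t * E j"
  using assms
proof (induction "j - s" arbitrary: s rule: less_induct)
  case less
  show ?case
  proof (cases "j = Suc s")
    case False
    have "E j * Eroot (Suc s) t = Eroot (Suc s) t * E j"
      using less False by (intro less.hyps) auto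
    moreover have "E j * E s = E s * E j"
      using less False by (intro E_far_commute) auto
    ultimately show ?thesis
      using less Eroot_Cons[of s t] commute_qbr by simp
  qed (use less E_Eroot_second in simp)
qed

lemma K_nestbr_E:
  "\<mu> \<in> wts n \<Longrightarrow> xs \<noteq> [] \<Longrightarrow> set xs \<subseteq> {1..n} \<Longrightarrow>
   K \<mu> * nestbr \<iota> c E xs = qsmul (sum_list (map \<mu> xs)) (nestbr \<iota> c E xs * K \<mu>)"
  by (rule qcommute_nestbr) (auto intro!: K_E)

lemma K_nestbr_F:
  assumes "\<mu> \<in> wts n" "xs \<noteq> []" "set xs \<subseteq> {1..n}"
  shows "K \<mu> * nestbr \<iota> c F xs = qsmul (- sum_list (map \<mu> xs)) (nestbr \<iota> c F xs * K \<mu>)"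
proof -
  have "K \<mu> * nestbr \<iota> c F xs = qsmul (sum_list (map (\<lambda>i. - \<mu> i) xs)) (nestbr \<iota> c F xs * K \<mu>)"
    using assms by (intro qcommute_nestbr) (auto intro!: K_F)
  then show ?thesis
    by (simp add: uminus_sum_list_map o_def)
qed

lemma interval_in_range: "1 \<le> s \<Longrightarrow> t \<le> n \<Longrightarrow> set [s..<Suc t] \<subseteq> {1..n}"
  by auto

lemma K_Eroot:
  "\<mu> \<in> wts n \<Longrightarrow> 1 \<le> s \<Longrightarrow> s \<le> t \<Longrightarrow> t \<le> n \<Longrightarrow>
   K \<mu> * Eroot s t = qsmul (\<Sum>i\<in>{s..t}. \<mu> i) (Eroot s t * K \<mu>)"
  using K_nestbr_E[OF _ _ interval_in_range] unfolding Eroot_def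
  by (simp add: sum_list_map_interval del: upt_Suc)

lemma K_Eroot_rev:
  "\<mu> \<in> wts n \<Longrightarrow> 1 \<le> s \<Longrightarrow> s \<le> t \<Longrightarrow> t \<le> n \<Longrightarrow>
   K \<mu> * Eroot_rev s t = qsmul (\<Sum>i\<in>{s..t}. \<mu> i) (Eroot_rev s t * K \<mu>)"
  using K_nestbr_E[of _ "rev [s..<Suc t]"] interval_in_range[of s t] unfolding Eroot_rev_def
  by (simp add: rev_map[symmetric] sum_list_map_interval del: upt_Suc)

lemma K_Froot:
  "\<mu> \<in> wts n \<Longrightarrow> 1 \<le> s \<Longrightarrow> s \<le> t \<Longrightarrow> t \<le> n \<Longrightarrow>
   K \<mu> * Froot s t = qsmul (- (\<Sum>i\<in>{s..t}. \<mu> i)) (Froot s t * K \<mu>)"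
  using K_nestbr_F[OF _ _ interval_in_range] unfolding Froot_def
  by (simp add: sum_list_map_interval del: upt_Suc)

lemma root_sum_wts [simp]: "root_sum s t \<in> wts n"
  by (simp add: root_sum_def)

lemma root_sum_apply:
  assumes "1 \<le> s" "t \<le> n" "i \<in> {1..n}"
  shows "root_sum s t i = (\<Sum>j\<in>{s..t}. alpha n i j)"
  unfolding root_sum_def sum_fun_apply using assms by (intro sum.cong) (auto intro: alpha_sym)

lemma Froot_snoc:
  assumes "1 \<le> s" "s \<le> t" "Suc t \<le> n"
  shows "Froot s (Suc t) = qbr \<iota> qq (Froot s t) (F (Suc t))"
proof -
  have split: "[s..<Suc (Suc t)] = [s..<Suc t] @ [Suc t]"
    using assms by simp
  have "nestbr \<iota> qq F ([s..<Suc t] @ [Suc t]) = qbr \<iota> qq (nestbr \<iota> qq F [s..<Suc t]) (F (Suc t))"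
  proof (rule nestbr_snoc)
    fix i
    assume "i \<in> set (butlast [s..<Suc t])"
    then have "s \<le> i" "i < t"
      using assms by auto
    then show "F i * F (Suc t) = F (Suc t) * F i"
      using assms by (intro F_far_commute) auto
  qed (use assms in simp)
  then show ?thesis
    unfolding Froot_def split .
qed

lemma Eroot_rev_Cons:
  "s \<le> t \<Longrightarrow> Eroot_rev s (Suc t) = qbr \<iota> (inverse qq) (E (Suc t)) (Eroot_rev s t)"
  by (simp add: Eroot_rev_def nestbr_Cons)

lemma K_root_sum_Suc:
  assumes "s \<le> Suc t"
  shows "K (root_sum s (Suc t)) = K (root_sum s t) * K (alpha n (Suc t))"
    and "K (- root_sum s (Suc t)) = K (- root_sum s t) * K (- alpha n (Suc t))"
proof -
  have "root_sum s (Suc t) = root_sum s t + alpha n (Suc t)"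
    using assms by (simp add: root_sum_def add.commute)
  then show "K (root_sum s (Suc t)) = K (root_sum s t) * K (alpha n (Suc t))"
    and "K (- root_sum s (Suc t)) = K (- root_sum s t) * K (- alpha n (Suc t))"
    by (simp_all only: K_add root_sum_wts alpha_wts wts_uminus minus_add_distrib)
qed

lemma root_sum_at_next:
  "1 \<le> s \<Longrightarrow> s \<le> t \<Longrightarrow> Suc t \<le> n \<Longrightarrow> root_sum s t (Suc t) = - 1"
  by (simp add: root_sum_apply sum_alpha)

lemma sum_alpha_next:
  "1 \<le> s \<Longrightarrow> s \<le> t \<Longrightarrow> Suc t \<le> n \<Longrightarrow> (\<Sum>i\<in>{s..t}. alpha n (Suc t) i) = - 1"
  by (simp add: sum_alpha)

lemma Froot_Eroot_rev_single:
  "s \<in> {1..n} \<Longrightarrow>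
    Froot s s * Eroot_rev s s - Eroot_rev s s * Froot s s
        = - smul kappa (K (root_sum s s) - K (- root_sum s s))"
proof -
  assume s: "s \<in> {1..n}"
  have "root_sum s s = alpha n s"
    by (simp add: root_sum_def)
  moreover have "Froot s s * Eroot_rev s s - Eroot_rev s s * Froot s s = - (E s * F s - F s * E s)"
    by (simp add: Froot_def Eroot_rev_def)
  ultimately show ?thesis
    using s by (simp only: E_F_commutator)
qed

lemma Froot_Eroot_rev_commutator:
  "1 \<le> s \<Longrightarrow> s \<le> t \<Longrightarrow> t \<le> n \<Longrightarrow>
    Froot s t * Eroot_rev s t - Eroot_rev s t * Froot s t
        = - smul kappa (K (root_sum s t) - K (- root_sum s t))"
proof (induction t)
  case (Suc t)
  show ?case
  proof (cases "s = Suc t")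
    case False
    let ?A = "Froot s t" and ?D = "Eroot_rev s t" and ?\<beta> = "root_sum s t" and ?\<alpha> = "alpha n (Suc t)"
    have t: "1 \<le> s" "s \<le> t" "Suc t \<le> n"
      using Suc.prems False by auto
    have "F (Suc t) * ?D = ?D * F (Suc t)"
      unfolding Eroot_rev_def using t by (intro commute_nestbr) (auto simp: E_F_commute)
    moreover have "?A * E (Suc t) = E (Suc t) * ?A"
      unfolding Froot_def using t by (intro commute_nestbr[symmetric]) (auto simp: E_F_commute)
    moreover have "?A * ?D - ?D * ?A = - smul kappa (K ?\<beta> - K (- ?\<beta>))"
      by (rule Suc.IH) (use t in auto)
    then have "?A * ?D = ?D * ?A - smul kappa (K ?\<beta> - K (- ?\<beta>))"
      by (simp add: algebra_simps)
    moreover have "F (Suc t) * E (Suc t) = E (Suc t) * F (Suc t) - smul kappa (K ?\<alpha> - K (- ?\<alpha>))"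
      using E_F_commutator[of "Suc t"] t by (simp add: algebra_simps)
    ultimately have "qbr \<iota> qq ?A (F (Suc t)) * qbr \<iota> (inverse qq) (E (Suc t)) ?D
        - qbr \<iota> (inverse qq) (E (Suc t)) ?D * qbr \<iota> qq ?A (F (Suc t))
        = - smul kappa (K ?\<beta> * K ?\<alpha> - K (- ?\<beta>) * K (- ?\<alpha>))"
      using t by (intro commutator_qbr_qbr)
        (simp_all add: K_E K_F K_Froot K_Eroot_rev K_commute root_sum_at_next sum_alpha_next sum_negf)
    then show ?thesis
      using t unfolding K_root_sum_Suc[OF \<open>s \<le> Suc t\<close>] by (simp add: Froot_snoc Eroot_rev_Cons)
  next
    case True
    then show ?thesis
      using Suc.prems Froot_Eroot_rev_single[of s] by (simp only: atLeastAtMost_iff)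
  qed
qed simp

lemma Eroot_Eroot_rev_qcommute:
  assumes "1 \<le> s" "s \<le> u" "u < t" "t \<le> n"
  shows "Eroot s t * Eroot_rev s u = qsmul (- 1) (Eroot_rev s u * Eroot s t)"
proof -
  let ?g = "\<lambda>j. if j = s then - 1 else 0 :: int"
  have "Eroot s t * E j = qsmul (?g j) (E j * Eroot s t)" if "j \<in> set (rev [s..<Suc u])" for j
  proof (cases "j = s")
    case True
    then show ?thesis
      using E_Eroot_first[of s t] assms by simp
  next
    case False
    then have "s < j" "j < t"
      using assms that by auto
    then show ?thesis
      using E_Eroot_inner[of s j t] assms by simp
  qed
  then have "Eroot s t * Eroot_rev s u
      = qsmul (sum_list (map ?g (rev [s..<Suc u]))) (Eroot_rev s u * Eroot s t)"
    unfolding Eroot_rev_def using assms by (intro qcommute_nestbr) simp_all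
  moreover have "sum_list (map ?g (rev [s..<Suc u])) = - 1"
    using assms by (simp add: rev_map[symmetric] sum_list_map_interval del: upt_Suc)
  ultimately show ?thesis
    by simp
qed

end

section \<open>The Satake diagram of type AIII\<close>

locale AIII_setting = Uq_algebra +
  fixes r :: nat
  assumes r_ge_2: "2 \<le> r" and r_le: "r + 1 \<le> (n + 1) div 2"
begin

lemma n_ge: "2 * r + 1 \<le> n"
  using r_le by presburger

definition tr :: nat where
  "tr = n + 1 - r"

lemma tau_r: "tau n r = tr"
  by (simp add: tau_def tr_def)

lemma tau_r_pred: "tau n (r - 1) = tr + 1"
  using n_ge r_ge_2 by (simp add: tau_def tr_def)

lemma tr_bounds: "r + 2 \<le> tr" "tr \<le> n" "n - r = tr - 1"
  using n_ge r_ge_2 by (auto simp: tr_def)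

lemma indices: "r - 1 \<in> {1..n}" "r \<in> {1..n}" "tr \<in> {1..n}" "tr + 1 \<in> {1..n}"
  using n_ge r_ge_2 by (auto simp: tr_def)

lemma X_indices: "j \<in> {r + 1..n - r} \<Longrightarrow> j \<in> {1..n} \<and> r + 1 \<le> j \<and> j + 1 \<le> tr"
  using tr_bounds by auto

lemma alpha_values:
  "alpha n r (r - 1) = - 1" "alpha n r tr = 0" "alpha n r (tr + 1) = 0"
  "alpha n tr (r - 1) = 0" "alpha n tr r = 0" "alpha n tr (tr + 1) = - 1"
  "alpha n (r - 1) r = - 1" "alpha n (r - 1) tr = 0"
  "alpha n r r = 2" "alpha n tr tr = 2"
  using n_ge r_ge_2 by (simp_all add: alpha_def tr_def; arith)+

lemma sum_X_alpha:
  "(\<Sum>i\<in>{r + 1..n - r}. alpha n r i) = - 1" "(\<Sum>i\<in>{r + 1..n - r}. alpha n tr i) = - 1"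
  "(\<Sum>i\<in>{r + 1..n - r}. alpha n (r - 1) i) = 0"
  using n_ge r_ge_2 by (simp_all add: sum_alpha tr_def; arith)+

lemma sum_X_minus_alpha: "(\<Sum>i\<in>{r + 1..n - r}. (- alpha n j) i) = - (\<Sum>i\<in>{r + 1..n - r}. alpha n j i)"
  by (simp add: sum_negf)

lemma EXp_eq: "EXp n r \<iota> E = Eroot (r + 1) (n - r)"
  using n_ge by (simp add: EXp_def Eroot_def Suc_diff_le)

lemma EXm_eq: "EXm n r \<iota> E = Eroot_rev (r + 1) (n - r)"
  using n_ge by (simp add: EXm_def Eroot_rev_def Suc_diff_le)

lemma FXp_eq: "FXp n r \<iota> F = Froot (r + 1) (n - r)"
  using n_ge by (simp add: FXp_def Froot_def Suc_diff_le)

lemma KX_eq: "KX n r K = K (root_sum (r + 1) (n - r))" and KXinv_eq: "KXinv n r K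
    = K (- root_sum (r + 1) (n - r))"
  by (simp_all add: KX_def KXinv_def root_sum_def)

lemma commute_EXp: "(\<And>j. j \<in> {r + 1..n - r} \<Longrightarrow> y * E j = E j * y)
    \<Longrightarrow> y * EXp n r \<iota> E = EXp n r \<iota> E * y"
  unfolding EXp_eq Eroot_def using n_ge by (intro commute_nestbr) auto

lemma commute_EXm: "(\<And>j. j \<in> {r + 1..n - r} \<Longrightarrow> y * E j = E j * y)
    \<Longrightarrow> y * EXm n r \<iota> E = EXm n r \<iota> E * y"
  unfolding EXm_eq Eroot_rev_def using n_ge by (intro commute_nestbr) auto

lemma commute_FXp: "(\<And>j. j \<in> {r + 1..n - r} \<Longrightarrow> y * F j = F j * y)
    \<Longrightarrow> y * FXp n r \<iota> F = FXp n r \<iota> F * y"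
  unfolding FXp_eq Froot_def using n_ge by (intro commute_nestbr) auto

lemma K_EXp: "\<mu> \<in> wts n \<Longrightarrow> K \<mu> * EXp n r \<iota> E = qsmul (\<Sum>i\<in>{r + 1..n - r}. \<mu> i) (EXp n r \<iota> E * K \<mu>)"
  unfolding EXp_eq using n_ge by (intro K_Eroot) auto

lemma K_EXm: "\<mu> \<in> wts n \<Longrightarrow> K \<mu> * EXm n r \<iota> E = qsmul (\<Sum>i\<in>{r + 1..n - r}. \<mu> i) (EXm n r \<iota> E * K \<mu>)"
  unfolding EXm_eq using n_ge by (intro K_Eroot_rev) auto

lemma K_FXp: "\<mu> \<in> wts n \<Longrightarrow> K \<mu> * FXp n r \<iota> F
    = qsmul (- (\<Sum>i\<in>{r + 1..n - r}. \<mu> i)) (FXp n r \<iota> F * K \<mu>)"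
  unfolding FXp_eq using n_ge by (intro K_Froot) auto

lemma F_commute_E_X:
  assumes "i \<in> {1..n}" "i \<notin> {r + 1..n - r}" "j \<in> {r + 1..n - r}"
  shows "F i * E j = E j * F i"
proof -
  have "j \<in> {1..n}" "j \<noteq> i"
    using assms by auto
  then show ?thesis
    using E_F_commute[of j i] assms(1) by simp
qed

lemma root_sum_X_outside:
  "root_sum (r + 1) (n - r) (r - 1) = 0" "root_sum (r + 1) (n - r) (tr + 1) = 0"
  using indices n_ge r_ge_2 by (simp_all add: root_sum_apply sum_alpha tr_def; arith)+

lemma Lw_r: "Lw n K r = K (alpha n r) * K (- alpha n tr)"
  and Lw_tr: "Lw n K tr = K (alpha n tr) * K (- alpha n r)"
  using tau_tau[OF indices(2)] by (simp_all add: Lw_def tau_r)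

lemma Lw_eq: "Lw n K r = K (alpha n r - alpha n tr)" "Lw n K tr = K (alpha n tr - alpha n r)"
  by (simp_all add: Lw_r Lw_tr K_add)

definition E_Xtr where
  "E_Xtr = qbr \<iota> (inverse qq) (EXp n r \<iota> E) (E tr)"

definition E_Xr where
  "E_Xr = qbr \<iota> (inverse qq) (EXm n r \<iota> E) (E r)"

lemma E_Xtr_eq_Eroot: "E_Xtr = Eroot (r + 1) tr"
  using Eroot_snoc[of "r + 1" tr] tr_bounds n_ge by (simp add: E_Xtr_def EXp_eq)

lemma E_Xtr_E_Xr_commute: "E_Xtr * E_Xr = E_Xr * E_Xtr"
  unfolding E_Xr_def
proof (rule commute_qbr_of_qcommute)
  show "E_Xtr * EXm n r \<iota> E = qsmul (- 1) (EXm n r \<iota> E * E_Xtr)"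
    unfolding E_Xtr_eq_Eroot EXm_eq using tr_bounds n_ge by (intro Eroot_Eroot_rev_qcommute) auto
  have "qbr \<iota> (inverse qq) (E r) E_Xtr = Eroot r tr"
    using tr_bounds by (simp add: E_Xtr_eq_Eroot Eroot_Cons)
  moreover have "EXm n r \<iota> E * Eroot r tr = Eroot r tr * EXm n r \<iota> E"
    unfolding EXm_eq Eroot_rev_def using tr_bounds n_ge r_ge_2
    by (intro commute_nestbr[symmetric]) (auto simp: E_Eroot_inner)
  ultimately show "EXm n r \<iota> E * qbr \<iota> (inverse qq) (E r) E_Xtr
      = qbr \<iota> (inverse qq) (E r) E_Xtr * EXm n r \<iota> E"
    by simp
qed

definition B_pred where
  "B_pred s = F (r - 1) - smul s (E (tr + 1) * K (- alpha n (r - 1)))"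

definition B_r where
  "B_r s = F r - smul s (E_Xtr * K (- alpha n r))"

definition B_tr where
  "B_tr s = F tr - smul s (E_Xr * K (- alpha n tr))"

lemma B_values:
  "Bgen n r \<iota> E F K c (r - 1) = B_pred (c (r - 1))"
  "Bgen n r \<iota> E F K c r = B_r (c r)"
  "Bgen n r \<iota> E F K c (tau n r) = B_tr (c tr)"
  using r_ge_2 tr_bounds unfolding Bgen_def tau_r tau_r_pred
  by (auto simp: B_pred_def B_r_def B_tr_def smul_def mult.assoc E_Xtr_def E_Xr_def)

lemma B_pred_B_tr_commute: "B_pred s * B_tr t = B_tr t * B_pred s"
  unfolding B_pred_def B_tr_def
proof (rule commute_diff_smul)
  note idx = indices tr_bounds n_ge r_ge_2
  show "F (r - 1) * F tr = F tr * F (r - 1)"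
    using idx by (intro F_far_commute) auto
  have "F (r - 1) * E_Xr = E_Xr * F (r - 1)"
    unfolding E_Xr_def using idx
    by (intro commute_qbr commute_EXm) (auto simp: E_F_commute[symmetric])
  moreover have "K (- alpha n tr) * F (r - 1) = F (r - 1) * K (- alpha n tr)"
    using idx K_F[of "- alpha n tr" "r - 1"] alpha_values by simp
  ultimately show "F (r - 1) * (E_Xr * K (- alpha n tr)) = E_Xr * K (- alpha n tr) * F (r - 1)"
    by (metis mult.assoc)
  have "E (tr + 1) * F tr = F tr * E (tr + 1)"
    using idx by (intro E_F_commute) auto
  moreover have "K (- alpha n (r - 1)) * F tr = F tr * K (- alpha n (r - 1))"
    using idx K_F[of "- alpha n (r - 1)" tr] alpha_values by simp
  ultimately show "E (tr + 1) * K (- alpha n (r - 1)) * F tr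
      = F tr * (E (tr + 1) * K (- alpha n (r - 1)))"
    by (metis mult.assoc)
  show "E (tr + 1) * K (- alpha n (r - 1)) * (E_Xr * K (- alpha n tr))
      = E_Xr * K (- alpha n tr) * (E (tr + 1) * K (- alpha n (r - 1)))"
  proof (rule commute_mult_qcommute)
    show "E (tr + 1) * E_Xr = E_Xr * E (tr + 1)"
      unfolding E_Xr_def using idx by (intro commute_qbr commute_EXm E_far_commute) auto
    have "K (- alpha n (r - 1)) * E r = qsmul 1 (E r * K (- alpha n (r - 1)))"
      using idx K_E[of "- alpha n (r - 1)" r] alpha_values by simp
    then show "K (- alpha n (r - 1)) * E_Xr = qsmul 1 (E_Xr * K (- alpha n (r - 1)))"
      unfolding E_Xr_def using qcommute_qbr[OF K_EXm] sum_X_alpha sum_X_minus_alpha by simp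
    show "K (- alpha n tr) * E (tr + 1) = qsmul 1 (E (tr + 1) * K (- alpha n tr))"
      using idx K_E[of "- alpha n tr" "tr + 1"] alpha_values by simp
  qed (simp add: K_commute)
qed

lemma E_Xr_F_r_commutator: "E_Xr * F r - F r * E_Xr = qsmul (- 1) (EXm n r \<iota> E * K (alpha n r))"
  unfolding E_Xr_def
proof (rule qbr_commutator)
  show "F r * EXm n r \<iota> E = EXm n r \<iota> E * F r"
    using indices by (intro commute_EXm F_commute_E_X) auto
  show "E r * F r - F r * E r = smul kappa (K (alpha n r) - K (- alpha n r))"
    using indices(2) by (rule E_F_commutator)
  show "K (alpha n r) * EXm n r \<iota> E = qsmul (- 1) (EXm n r \<iota> E * K (alpha n r))"
    using K_EXm sum_X_alpha by simp
  show "K (- alpha n r) * EXm n r \<iota> E = qsmul 1 (EXm n r \<iota> E * K (- alpha n r))"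
    using K_EXm sum_X_alpha sum_X_minus_alpha by simp
qed

lemma E_Xtr_F_tr_commutator: "E_Xtr * F tr - F tr * E_Xtr
    = qsmul (- 1) (EXp n r \<iota> E * K (alpha n tr))"
  unfolding E_Xtr_def
proof (rule qbr_commutator)
  show "F tr * EXp n r \<iota> E = EXp n r \<iota> E * F tr"
    using indices tr_bounds by (intro commute_EXp F_commute_E_X) auto
  show "E tr * F tr - F tr * E tr = smul kappa (K (alpha n tr) - K (- alpha n tr))"
    using indices(3) by (rule E_F_commutator)
  show "K (alpha n tr) * EXp n r \<iota> E = qsmul (- 1) (EXp n r \<iota> E * K (alpha n tr))"
    using K_EXp sum_X_alpha by simp
  show "K (- alpha n tr) * EXp n r \<iota> E = qsmul 1 (EXp n r \<iota> E * K (- alpha n tr))"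
    using K_EXp sum_X_alpha sum_X_minus_alpha by simp
qed

lemma E_Xtr_K_E_Xr_K_commute:
  "E_Xtr * K (- alpha n r) * (E_Xr * K (- alpha n tr))
      = E_Xr * K (- alpha n tr) * (E_Xtr * K (- alpha n r))"
proof (rule commute_mult_qcommute)
  show "E_Xtr * E_Xr = E_Xr * E_Xtr"
    by (rule E_Xtr_E_Xr_commute)
  have "K (- alpha n r) * E r = qsmul (- 2) (E r * K (- alpha n r))"
    using indices K_E[of "- alpha n r" r] alpha_values by simp
  then show "K (- alpha n r) * E_Xr = qsmul (- 1) (E_Xr * K (- alpha n r))"
    unfolding E_Xr_def using qcommute_qbr[OF K_EXm] sum_X_alpha sum_X_minus_alpha by simp
  have "K (- alpha n tr) * E tr = qsmul (- 2) (E tr * K (- alpha n tr))"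
    using indices K_E[of "- alpha n tr" tr] alpha_values by simp
  then show "K (- alpha n tr) * E_Xtr = qsmul (- 1) (E_Xtr * K (- alpha n tr))"
    unfolding E_Xtr_def using qcommute_qbr[OF K_EXp] sum_X_alpha sum_X_minus_alpha by simp
qed (simp add: K_commute)

lemma B_r_B_tr_commutator:
  "B_r u * B_tr t - B_tr t * B_r u
   = smul t (qsmul (- 1) (EXm n r \<iota> E * Lw n K r)) - smul u (qsmul (- 1) (EXp n r \<iota> E * Lw n K tr))"
proof -
  have "F r * F tr - F tr * F r = 0"
    using indices tr_bounds by (simp add: F_far_commute)
  moreover have "F r * (E_Xr * K (- alpha n tr)) - E_Xr * K (- alpha n tr) * F r
      = - qsmul (- 1) (EXm n r \<iota> E * K (alpha n r)) * K (- alpha n tr)"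
  proof -
    have "K (- alpha n tr) * F r = F r * K (- alpha n tr)"
      using indices K_F[of "- alpha n tr" r] alpha_values by simp
    then have "F r * (E_Xr * K (- alpha n tr)) - E_Xr * K (- alpha n tr) * F r
        = - (E_Xr * F r - F r * E_Xr) * K (- alpha n tr)"
      by (simp add: algebra_simps)
    then show ?thesis
      by (simp only: E_Xr_F_r_commutator)
  qed
  moreover have "E_Xtr * K (- alpha n r) * F tr - F tr * (E_Xtr * K (- alpha n r))
      = qsmul (- 1) (EXp n r \<iota> E * K (alpha n tr)) * K (- alpha n r)"
  proof -
    have "K (- alpha n r) * F tr = F tr * K (- alpha n r)"
      using indices K_F[of "- alpha n r" tr] alpha_values by simp
    then have "E_Xtr * K (- alpha n r) * F tr - F tr * (E_Xtr * K (- alpha n r))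
        = (E_Xtr * F tr - F tr * E_Xtr) * K (- alpha n r)"
      by (simp add: algebra_simps)
    then show ?thesis
      by (simp only: E_Xtr_F_tr_commutator)
  qed
  ultimately show ?thesis
    unfolding B_r_def B_tr_def commutator_diff_smul E_Xtr_K_E_Xr_K_commute Lw_r Lw_tr by
        (simp add: mult.assoc)
qed

lemma K_B_pred:
  assumes "\<mu> \<in> wts n" "\<mu> (tr + 1) = k" "\<mu> (r - 1) = - k"
  shows "K \<mu> * B_pred s = qsmul k (B_pred s * K \<mu>)"
  unfolding B_pred_def
proof (rule qcommute_diff_smul_mult)
  show "K \<mu> * F (r - 1) = qsmul k (F (r - 1) * K \<mu>)" "K \<mu> * E (tr + 1) = qsmul k (E (tr + 1) * K \<mu>)"
    using assms indices by (simp_all add: K_F K_E)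
qed (simp_all add: assms K_commute)

lemma B_pred_commute_X:
  assumes "j \<in> {r + 1..n - r}"
  shows "B_pred s * E j = E j * B_pred s" "B_pred s * F j = F j * B_pred s"
proof -
  have j: "j \<in> {1..n}" "r + 1 \<le> j" "j + 1 \<le> tr" "(- alpha n (r - 1)) j = 0"
    using X_indices[OF assms] r_ge_2 by (auto simp: alpha_def)
  have "E j * F (r - 1) = F (r - 1) * E j" "E j * E (tr + 1) = E (tr + 1) * E j"
    "F j * F (r - 1) = F (r - 1) * F j" "F j * E (tr + 1) = E (tr + 1) * F j"
    using j indices by (simp_all add: E_F_commute E_far_commute F_far_commute)
  moreover have "E j * K (- alpha n (r - 1)) = K (- alpha n (r - 1)) * E j"
    "F j * K (- alpha n (r - 1)) = K (- alpha n (r - 1)) * F j"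
    using j K_E[of "- alpha n (r - 1)" j] K_F[of "- alpha n (r - 1)" j] by simp_all
  ultimately have "E j * B_pred s = qsmul 0 (B_pred s * E j)" "F j * B_pred s
      = qsmul 0 (B_pred s * F j)"
    unfolding B_pred_def by (intro qcommute_diff_smul_mult[where a = 0 and b = 0]; simp)+
  then show "B_pred s * E j = E j * B_pred s" "B_pred s * F j = F j * B_pred s"
    by simp_all
qed

lemma FXp_commute_Lw: "Lw n K r * FXp n r \<iota> F = FXp n r \<iota> F * Lw n K r"
  "Lw n K tr * FXp n r \<iota> F = FXp n r \<iota> F * Lw n K tr"
  using K_FXp[of "alpha n r - alpha n tr"] K_FXp[of "alpha n tr - alpha n r"] sum_X_alpha
  by (simp_all add: Lw_eq sum_subtractf)

lemma B_pred_Lw: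
  "B_pred s * Lw n K r = qsmul (- 1) (Lw n K r * B_pred s)"
  "B_pred s * Lw n K tr = qsmul 1 (Lw n K tr * B_pred s)"
proof -
  have "K (alpha n r - alpha n tr) * B_pred s = qsmul 1 (B_pred s * K (alpha n r - alpha n tr))"
    "K (alpha n tr - alpha n r) * B_pred s = qsmul (- 1) (B_pred s * K (alpha n tr - alpha n r))"
    using alpha_values by (simp_all add: K_B_pred)
  then show "B_pred s * Lw n K r = qsmul (- 1) (Lw n K r * B_pred s)"
    "B_pred s * Lw n K tr = qsmul 1 (Lw n K tr * B_pred s)"
    by (simp_all add: Lw_eq)
qed

lemma B_pred_commute_KX: "B_pred s * (KX n r K - KXinv n r K) = (KX n r K - KXinv n r K) * B_pred s"
proof -
  have "K (root_sum (r + 1) (n - r)) * B_pred s = qsmul 0 (B_pred s * K (root_sum (r + 1) (n - r)))"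
    "K (- root_sum (r + 1) (n - r)) * B_pred s = qsmul 0 (B_pred s * K (- root_sum (r + 1) (n - r)))"
    using root_sum_X_outside by (simp_all add: K_B_pred)
  then show ?thesis
    by (simp add: KX_eq KXinv_eq algebra_simps)
qed

lemma relation_FXp:
  "qbr \<iota> qq (B_pred s) (qbr \<iota> qq (B_r u) (qbr \<iota> qq (FXp n r \<iota> F) (B_tr t)))
   = qbr \<iota> qq (qbr \<iota> qq (B_pred s) (qbr \<iota> qq (B_r u) (FXp n r \<iota> F))) (B_tr t)
     + \<iota> (qq * t) * B_pred s * Lw n K r * (KX n r K - KXinv n r K)"
proof -
  let ?f = "FXp n r \<iota> F" and ?Ep = "EXp n r \<iota> E" and ?Em = "EXm n r \<iota> E"
    and ?L = "Lw n K r" and ?L' = "Lw n K tr" and ?D = "KX n r K - KXinv n r K"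
    and ?b = "B_r u" and ?d = "B_tr t"
  have fEm: "?f * ?Em - ?Em * ?f = - smul kappa ?D"
    unfolding FXp_eq EXm_eq KX_eq KXinv_eq using n_ge by (intro Froot_Eroot_rev_commutator) auto
  have "?f * (?b * ?d - ?d * ?b) - (?b * ?d - ?d * ?b) * ?f
      = smul t (qsmul (- 1) ((?f * ?Em - ?Em * ?f) * ?L))
        - smul u (qsmul (- 1) ((?f * ?Ep - ?Ep * ?f) * ?L'))"
    unfolding B_r_B_tr_commutator using FXp_commute_Lw by (rule commutator_right_factor)
  also have "\<dots> = smul t (qsmul (- 1) (- smul kappa ?D * ?L))
      - smul u (qsmul (- 1) ((?f * ?Ep - ?Ep * ?f) * ?L'))"
    unfolding fEm ..
  finally have bracket: "?f * (?b * ?d - ?d * ?b) - (?b * ?d - ?d * ?b) * ?f = \<dots>" .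
  have "B_pred s * ?f = ?f * B_pred s" "B_pred s * ?Ep = ?Ep * B_pred s"
    using B_pred_commute_X by (auto intro!: commute_FXp commute_EXp)
  then have "B_pred s * (?f * ?Ep - ?Ep * ?f) = (?f * ?Ep - ?Ep * ?f) * B_pred s"
    by (rule commute_commutator)
  moreover have "?D * ?L = ?L * ?D"
    by (simp add: KX_eq KXinv_eq Lw_eq algebra_simps K_commute)
  ultimately have "qbr \<iota> qq (B_pred s) (?f * (?b * ?d - ?d * ?b) - (?b * ?d - ?d * ?b) * ?f)
      = smul t (B_pred s * ?L * ?D)"
    unfolding bracket using B_pred_Lw B_pred_commute_KX by (intro qbr_qq_remainder)
  then show ?thesis
    using qbr_qq_nested_rearrange[OF B_pred_B_tr_commute]
    by (simp add: qsmul_def smul_def scalar_mult mult.assoc)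
qed

lemma relation_FXp_Bgen:
  "qbr \<iota> qq (Bgen n r \<iota> E F K c (r - 1))
      (qbr \<iota> qq (Bgen n r \<iota> E F K c r) (qbr \<iota> qq (FXp n r \<iota> F) (Bgen n r \<iota> E F K c (tau n r))))
    = qbr \<iota> qq (qbr \<iota> qq (Bgen n r \<iota> E F K c (r - 1)) (qbr \<iota> qq (Bgen n r \<iota> E F K c r) (FXp n r \<iota> F)))
        (Bgen n r \<iota> E F K c (tau n r))
      + \<iota> (qq * c (tau n r)) * Bgen n r \<iota> E F K c (r - 1) * Lw n K r * (KX n r K - KXinv n r K)"
  unfolding B_values unfolding tau_r by (rule relation_FXp)

lemma twist_AIII_setting: "AIII_setting n \<iota> (E \<circ> tau n) (F \<circ> tau n) (\<lambda>\<mu>. K (\<mu> \<circ> tau n)) r"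
  using twist_rels r_ge_2 r_le by unfold_locales

lemma map_tau_X: "map (tau n) [r + 1..<n - r + 1] = rev [r + 1..<n - r + 1]"
  using n_ge by (intro nth_equalityI) (simp_all add: rev_nth tau_def del: upt_Suc)

lemma X_list_nonempty: "[r + 1..<n - r + 1] \<noteq> []"
  using n_ge by simp

lemma twist_EXp: "EXp n r \<iota> (E \<circ> tau n) = EXm n r \<iota> E"
  and twist_FXp: "FXp n r \<iota> (F \<circ> tau n) = FXm n r \<iota> F"
  unfolding EXp_def EXm_def FXp_def FXm_def nestbr_map[OF X_list_nonempty] map_tau_X by (rule refl)+

lemma twist_EXm: "EXm n r \<iota> (E \<circ> tau n) = EXp n r \<iota> E"
proof -
  have rev_nonempty: "rev [r + 1..<n - r + 1] \<noteq> []"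
    using X_list_nonempty by simp
  show ?thesis
    unfolding EXm_def EXp_def nestbr_map[OF rev_nonempty] rev_map[symmetric] map_tau_X by simp
qed

lemma twist_root_sum_X: "root_sum (r + 1) (n - r) \<circ> tau n = root_sum (r + 1) (n - r)"
proof -
  have "root_sum (r + 1) (n - r) \<circ> tau n = (\<Sum>j\<in>{r + 1..n - r}. alpha n j \<circ> tau n)"
    by (simp add: root_sum_def fun_eq_iff sum_fun_apply)
  also have "\<dots> = (\<Sum>j\<in>{r + 1..n - r}. alpha n (tau n j))"
    using n_ge by (intro sum.cong) (auto simp: alpha_comp_tau)
  also have "\<dots> = root_sum (r + 1) (n - r)"
    unfolding root_sum_def using n_ge
    by (intro sum.reindex_bij_witness[where i = "tau n" and j = "tau n"]) (auto simp: tau_def)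
  finally show ?thesis .
qed

lemma twist_KX: "KX n r (\<lambda>\<mu>. K (\<mu> \<circ> tau n)) = KX n r K"
  and twist_KXinv: "KXinv n r (\<lambda>\<mu>. K (\<mu> \<circ> tau n)) = KXinv n r K"
  using twist_root_sum_X by (simp_all add: KX_def KXinv_def uminus_comp flip: root_sum_def)

lemma twist_Lw: "Lw n (\<lambda>\<mu>. K (\<mu> \<circ> tau n)) r = Lw n K (tau n r)"
  using indices(2) tau_range[OF indices(2)] by (simp add: Lw_def uminus_comp alpha_comp_tau tau_tau)

lemma twist_Bgen:
  "Bgen n r \<iota> (E \<circ> tau n) (F \<circ> tau n) (\<lambda>\<mu>. K (\<mu> \<circ> tau n)) (c \<circ> tau n) (r - 1)
      = Bgen n r \<iota> E F K c (tau n (r - 1))"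
  "Bgen n r \<iota> (E \<circ> tau n) (F \<circ> tau n) (\<lambda>\<mu>. K (\<mu> \<circ> tau n)) (c \<circ> tau n) r
      = Bgen n r \<iota> E F K c (tau n r)"
  "Bgen n r \<iota> (E \<circ> tau n) (F \<circ> tau n) (\<lambda>\<mu>. K (\<mu> \<circ> tau n)) (c \<circ> tau n) (tau n r)
      = Bgen n r \<iota> E F K c r"
proof -
  have i: "r - 1 \<in> {1..n}" "r \<in> {1..n}" "tau n r \<in> {1..n}" "tau n (r - 1) \<in> {1..n}"
    using indices tau_r tau_r_pred by auto
  have "r - 1 \<noteq> r" "r - 1 \<noteq> tau n r" "tau n r \<noteq> r" "tau n (r - 1) \<noteq> r" "tau n (r - 1) \<noteq> tau n r"
    using r_ge_2 tr_bounds tau_r tau_r_pred by auto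
  with i show
    "Bgen n r \<iota> (E \<circ> tau n) (F \<circ> tau n) (\<lambda>\<mu>. K (\<mu> \<circ> tau n)) (c \<circ> tau n) (r - 1)
        = Bgen n r \<iota> E F K c (tau n (r - 1))"
    "Bgen n r \<iota> (E \<circ> tau n) (F \<circ> tau n) (\<lambda>\<mu>. K (\<mu> \<circ> tau n)) (c \<circ> tau n) r
        = Bgen n r \<iota> E F K c (tau n r)"
    "Bgen n r \<iota> (E \<circ> tau n) (F \<circ> tau n) (\<lambda>\<mu>. K (\<mu> \<circ> tau n)) (c \<circ> tau n) (tau n r)
        = Bgen n r \<iota> E F K c r"
    unfolding Bgen_def by (simp_all add: tau_tau uminus_comp alpha_comp_tau twist_EXp twist_EXm)
qed

lemma relation_FXm_Bgen:
  "qbr \<iota> qq (Bgen n r \<iota> E F K c (tau n (r - 1)))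
      (qbr \<iota> qq (Bgen n r \<iota> E F K c (tau n r)) (qbr \<iota> qq (FXm n r \<iota> F) (Bgen n r \<iota> E F K c r)))
    = qbr \<iota> qq (qbr \<iota> qq (Bgen n r \<iota> E F K c (tau n (r - 1))) (qbr \<iota> qq (Bgen n r \<iota> E F K c (tau n r)) (FXm n r \<iota> F)))
        (Bgen n r \<iota> E F K c r)
      + \<iota> (qq * c r) * Bgen n r \<iota> E F K c (tau n (r - 1)) * Lw n K (tau n r) * (KX n r K - KXinv n r K)"
proof -
  interpret twisted: AIII_setting n \<iota> "E \<circ> tau n" "F \<circ> tau n" "\<lambda>\<mu>. K (\<mu> \<circ> tau n)" r
    by (rule twist_AIII_setting)
  have "(c \<circ> tau n) (tau n r) = c r"
    using tau_tau[OF indices(2)] by simp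
  then show ?thesis
    using twisted.relation_FXp_Bgen[of "c \<circ> tau n"]
    unfolding twist_Bgen twist_FXp twist_KX twist_KXinv twist_Lw by simp
qed

end

theorem lemmaA2:
  fixes n r :: nat
    and \<iota> :: "'k::field_char_0 scal \<Rightarrow> 'a::ring_1"
    and E F :: "nat \<Rightarrow> 'a" and K :: "wt \<Rightarrow> 'a"
    and c :: "nat \<Rightarrow> 'k scal"
  assumes n: "n \<ge> 1"
    and r: "2 \<le> r" "r + 1 \<le> (n + 1) div 2"
    and rels: "Uq_rels n \<iota> E F K"
    and c_nz: "\<forall>i\<in>{1..n} - {r+1..n-r}. c i \<noteq> 0"
    and c_sym: "\<forall>i\<in>{1..n} - ({r+1..n-r} \<union> {r, tau n r}). c i = c (tau n i)"
  shows
   "qbr \<iota> qq (Bgen n r \<iota> E F K c (r - 1))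
      (qbr \<iota> qq (Bgen n r \<iota> E F K c r) (qbr \<iota> qq (FXp n r \<iota> F) (Bgen n r \<iota> E F K c (tau n r))))
    = qbr \<iota> qq (qbr \<iota> qq (Bgen n r \<iota> E F K c (r - 1)) (qbr \<iota> qq (Bgen n r \<iota> E F K c r) (FXp n r \<iota> F)))
        (Bgen n r \<iota> E F K c (tau n r))
      + \<iota> (qq * c (tau n r)) * Bgen n r \<iota> E F K c (r - 1) * Lw n K r * (KX n r K - KXinv n r K)
   \<and>
    qbr \<iota> qq (Bgen n r \<iota> E F K c (tau n (r - 1)))
      (qbr \<iota> qq (Bgen n r \<iota> E F K c (tau n r)) (qbr \<iota> qq (FXm n r \<iota> F) (Bgen n r \<iota> E F K c r)))
    = qbr \<iota> qq (qbr \<iota> qq (Bgen n r \<iota> E F K c (tau n (r - 1))) (qbr \<iota> qq (Bgen n r \<iota> E F K c (tau n r)) (FXm n r \<iota> F)))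
        (Bgen n r \<iota> E F K c r)
      + \<iota> (qq * c r) * Bgen n r \<iota> E F K c (tau n (r - 1)) * Lw n K (tau n r) * (KX n r K - KXinv n r K)"
proof -
  interpret AIII_setting n \<iota> E F K r
    using rels r by unfold_locales
  show ?thesis
    using relation_FXp_Bgen relation_FXm_Bgen by blast
qed

end
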